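(* Let $\Lambda$ be quasi-lacunary with parameters $q,N$. Let $\beta>0$, $\mu\in\mathcal{M}_{x^\beta}$ and $\alpha>-1$. There exists $k_0>0$ such that for all $k\geqslant k_0$, all $f_k\in F_k$ and all $p,s\geqslant1$, \[\|f_k\|_{L^p(\mathrm{d}\mu)}\lesssim\lambda_{n_k}^{\delta}\,\|f_k\|_{L^s((1-x)^\alpha\mathrm{d}x)},\qquad\delta=\frac{1+\alpha}{s}-\frac{\beta}{p},\] where the implicit constant depends only on $p,s,\alpha,\beta$ and $q,N$ (and not on $k$ or $f_k$).
   Context: $\Lambda=(\lambda_j)_{j\geqslant0}$ is an increasing sequence of positive reals with $\sum_j1/\lambda_j<\infty$. $\Lambda$ is quasi-lacunary with parameters $q>1$, $N\geqslant1$ if $\Lambda$ is partitioned into consecutive disjoint blocks $E_k=\{\lambda_j: n_k\leqslant j<n_{k+1}\}$ ($0=n_0<n_1<\dots$) with $\#E_k\leqslant N$ and $q\leqslant\lambda_{n_{k+1}}/\lambda_{n_k}\leqslant q^{2N}$. $F_k=\operatorname{Span}\{t^\lambda:\lambda\in E_k\}$ on $[0,1]$. $\mathcal{M}_{x^\beta}$ is the set of positive Borel measures $\mu$ on $[0,1]$ with $\mu([1-\varepsilon,1])\leqslant C\varepsilon^\beta$ for all $\varepsilon\in(0,1]$, $C$ depending only on $\mu$. *)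

theory Defs
  imports "HOL-Analysis.Analysis"
begin

definition muntz_seq :: "(nat \<Rightarrow> real) \<Rightarrow> bool" where
  "muntz_seq lam \<longleftrightarrow> strict_mono lam \<and> (\<forall>j. 0 < lam j) \<and> summable (\<lambda>j. 1 / lam j)"

text \<open>Quasi-lacunarity with parameters q, N, witnessed by the block boundaries nb
  (block k is E_k = {lam j : nb k \<le> j < nb (k+1)}).\<close>
definition quasi_lacunary :: "(nat \<Rightarrow> real) \<Rightarrow> real \<Rightarrow> nat \<Rightarrow> (nat \<Rightarrow> nat) \<Rightarrow> bool" where
  "quasi_lacunary lam q N nb \<longleftrightarrow>
     nb 0 = 0 \<and> strict_mono nb \<and> (\<forall>k. nb (Suc k) - nb k \<le> N) \<and>
     (\<forall>k. q \<le> lam (nb (Suc k)) / lam (nb k) \<and> lam (nb (Suc k)) / lam (nb k) \<le> q ^ (2 * N))"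

definition block_space :: "(nat \<Rightarrow> real) \<Rightarrow> (nat \<Rightarrow> nat) \<Rightarrow> nat \<Rightarrow> (real \<Rightarrow> real) set" where
  "block_space lam nb k =
     {f. \<exists>c :: nat \<Rightarrow> real. f = (\<lambda>t. \<Sum>j\<in>{nb k..<nb (Suc k)}. c j * t powr lam j)}"

definition in_M_beta :: "real \<Rightarrow> real \<Rightarrow> real measure \<Rightarrow> bool" where
  "in_M_beta \<beta> Cmu \<mu> \<longleftrightarrow>
     sets \<mu> = sets borel \<and> emeasure \<mu> (- {0..1}) = 0 \<and>
     (\<forall>\<epsilon>\<in>{0<..1}. emeasure \<mu> {1 - \<epsilon>..1} \<le> ennreal (Cmu * \<epsilon> powr \<beta>))"

definition Lp_norm :: "real measure \<Rightarrow> real \<Rightarrow> (real \<Rightarrow> real) \<Rightarrow> real" where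
  "Lp_norm \<mu> p f = (\<integral>x. \<bar>f x\<bar> powr p \<partial>\<mu>) powr (1 / p)"

definition wLp_norm :: "real \<Rightarrow> real \<Rightarrow> (real \<Rightarrow> real) \<Rightarrow> real" where
  "wLp_norm \<alpha> s f = (LINT x:{0..1}|lborel. \<bar>f x\<bar> powr s * (1 - x) powr \<alpha>) powr (1 / s)"

end

(*
  Put l = lambda_{n_k}. A block f(t) = sum c_j t^{lambda_j} in F_k becomes, after t = e^{y/l}, an
  exponential sum F(y) = sum c_j e^{rho_j y} with at most N frequencies rho_j = lambda_j / l in
  [1, q^{2N}]. Along any arithmetic progression such a sum satisfies a linear recurrence of
  order N with characteristic roots e^{rho_j d}, so N + 1 consecutive samples control all the
  others. Two consequences: |F| on [-1, -3/4] is bounded by the L^s mean of F over [-1, -1/2],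
  and |F(y)| <= C sup_{[-1,-3/4]} |F| e^{y/2} for all y <= 0. Going back to t, the interval
  [-1, -1/2] corresponds to 1 - t ~ 1/l, where (1 - t)^alpha ~ l^{-alpha}; hence
  |f(t)| <= C l^{(1+alpha)/s} ||f||_{L^s((1-x)^alpha dx)} t^{l/2}. Finally, for mu in M_{x^beta},
  a layer-cake decomposition of 1 - t into steps of size 1/l gives int t^{l/2} dmu = O(l^{-beta}).
*)

theory Submission
  imports Defs "HOL-Real_Asymp.Real_Asymp"
begin

section \<open>Linear recurrences with bounded characteristic roots\<close>

text \<open>In this section u i is the sequence u 0 after applying the first i factors of the
  difference operator (E - a 0) \<dots> (E - a (m - 1)), with E the shift n \<mapsto> n + 1; the hypothesis
  u m = 0 says that u 0 satisfies the corresponding linear recurrence of order m.\<close>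

lemma cascade_initial_bound:
  fixes u :: "nat \<Rightarrow> nat \<Rightarrow> real"
  assumes rec: "\<And>i n. i < m \<Longrightarrow> u (Suc i) n = u i (Suc n) - a i * u i n"
    and a: "\<And>i. i < m \<Longrightarrow> \<bar>a i\<bar> \<le> A" and "0 \<le> A"
    and samples: "\<And>k. k \<le> m \<Longrightarrow> \<bar>u 0 k\<bar> \<le> H"
  shows "i + k \<le> m \<Longrightarrow> \<bar>u i k\<bar> \<le> (1 + A) ^ i * H"
proof (induction i arbitrary: k)
  case 0
  then show ?case using samples by simp
next
  case (Suc i)
  have "H \<ge> 0" using samples[of 0] by linarith
  then have IH: "\<bar>u i n\<bar> \<le> (1 + A) ^ i * H" "0 \<le> (1 + A) ^ i * H" if "n \<le> Suc k" for n
    using Suc.IH[of n] Suc.prems that \<open>0 \<le> A\<close> by auto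
  have "\<bar>u (Suc i) k\<bar> \<le> \<bar>u i (Suc k)\<bar> + \<bar>a i\<bar> * \<bar>u i k\<bar>"
    using rec[of i k] Suc.prems abs_triangle_ineq4[of "u i (Suc k)" "a i * u i k"]
    by (simp add: abs_mult)
  also have "\<dots> \<le> (1 + A) ^ i * H + A * ((1 + A) ^ i * H)"
    using IH[of "Suc k"] IH[of k] a[of i] Suc.prems by (intro add_mono mult_mono) auto
  also have "\<dots> = (1 + A) ^ Suc i * H" by (simp add: algebra_simps)
  finally show ?case .
qed

lemma cascade_growth_bound:
  fixes u :: "nat \<Rightarrow> nat \<Rightarrow> real"
  assumes rec: "\<And>i n. i < m \<Longrightarrow> u (Suc i) n = u i (Suc n) - a i * u i n"
    and last: "\<And>n. u m n = 0"
    and a: "\<And>i. i < m \<Longrightarrow> \<bar>a i\<bar> \<le> A" and "0 \<le> A"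
    and init: "\<And>i. i \<le> m \<Longrightarrow> \<bar>u i 0\<bar> \<le> M"
    and "1 \<le> \<Gamma>" and \<theta>: "A + 1 / \<Gamma> \<le> \<theta>"
  shows "i \<le> m \<Longrightarrow> \<bar>u i n\<bar> \<le> \<Gamma> ^ (m - i) * \<theta> ^ n * M"
proof (induction n arbitrary: i)
  case 0
  have "0 \<le> M" using init[of m] last[of 0] by simp
  then have "M \<le> \<Gamma> ^ (m - i) * M"
    using mult_right_mono[OF one_le_power[OF \<open>1 \<le> \<Gamma>\<close>]] by simp
  then show ?case using init[OF 0(1)] by simp
next
  case (Suc n)
  have "0 \<le> M" using init[of m] last[of 0] by simp
  moreover have "0 \<le> \<theta>" using \<theta> \<open>0 \<le> A\<close> \<open>1 \<le> \<Gamma>\<close>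
    by (smt (verit) divide_nonneg_nonneg)
  ultimately have nonneg: "0 \<le> \<Gamma> ^ j * \<theta> ^ n * M" for j using \<open>1 \<le> \<Gamma>\<close> by simp
  show ?case
  proof (cases "i = m")
    case True
    then show ?thesis using last nonneg[of 0] \<open>0 \<le> \<theta>\<close> \<open>0 \<le> M\<close> by simp
  next
    case False
    with Suc.prems have i: "i < m" by simp
    then have m_i: "m - i = Suc (m - Suc i)" by simp
    have "u i (Suc n) = a i * u i n + u (Suc i) n" using rec[OF i, of n] by simp
    then have "\<bar>u i (Suc n)\<bar> \<le> \<bar>a i\<bar> * \<bar>u i n\<bar> + \<bar>u (Suc i) n\<bar>"
      by (metis abs_mult abs_triangle_ineq)
    also have "\<dots> \<le> A * (\<Gamma> ^ (m - i) * \<theta> ^ n * M) + \<Gamma> ^ (m - Suc i) * \<theta> ^ n * M"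
      using Suc.IH[of i] Suc.IH[of "Suc i"] a[OF i] i \<open>0 \<le> A\<close> by (intro add_mono mult_mono) auto
    also have "\<dots> = (A * \<Gamma> + 1) * (\<Gamma> ^ (m - Suc i) * \<theta> ^ n * M)"
      unfolding m_i by (simp add: algebra_simps)
    also have "\<dots> \<le> (\<theta> * \<Gamma>) * (\<Gamma> ^ (m - Suc i) * \<theta> ^ n * M)"
      using \<theta> \<open>1 \<le> \<Gamma>\<close> nonneg[of "m - Suc i"]
      by (intro mult_right_mono) (auto simp: field_simps)
    also have "\<dots> = \<Gamma> ^ (m - i) * \<theta> ^ Suc n * M"
      unfolding m_i by (simp add: algebra_simps)
    finally show ?thesis .
  qed
qed

lemma recurrence_extrapolation_bound:
  fixes u :: "nat \<Rightarrow> nat \<Rightarrow> real"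
  assumes rec: "\<And>i n. i < m \<Longrightarrow> u (Suc i) n = u i (Suc n) - a i * u i n"
    and last: "\<And>n. u m n = 0"
    and a: "\<And>i. i < m \<Longrightarrow> \<bar>a i\<bar> \<le> A" and "0 \<le> A"
    and samples: "\<And>k. k \<le> m \<Longrightarrow> \<bar>u 0 k\<bar> \<le> H"
    and "1 \<le> \<Gamma>" and "A + 1 / \<Gamma> \<le> \<theta>"
  shows "\<bar>u 0 n\<bar> \<le> (1 + A) ^ m * \<Gamma> ^ m * \<theta> ^ n * H"
proof -
  have "\<bar>u i 0\<bar> \<le> (1 + A) ^ m * H" if "i \<le> m" for i
  proof -
    have "\<bar>u i 0\<bar> \<le> (1 + A) ^ i * H"
      using cascade_initial_bound[where u = u and a = a and m = m, OF rec a \<open>0 \<le> A\<close> samples] that by simp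
    also have "\<dots> \<le> (1 + A) ^ m * H"
      using samples[of 0] \<open>0 \<le> A\<close> that by (intro mult_right_mono power_increasing) auto
    finally show ?thesis .
  qed
  from cascade_growth_bound[OF rec last a \<open>0 \<le> A\<close> this \<open>1 \<le> \<Gamma>\<close> \<open>A + 1 / \<Gamma> \<le> \<theta>\<close>, of 0 n]
  show ?thesis by (simp add: algebra_simps)
qed

section \<open>Exponential sums\<close>

definition exp_sum :: "(nat \<Rightarrow> real) \<Rightarrow> (nat \<Rightarrow> real) \<Rightarrow> nat set \<Rightarrow> real \<Rightarrow> real" where
  "exp_sum c \<rho> J y = (\<Sum>j\<in>J. c j * exp (\<rho> j * y))"

text \<open>The exponential sum with frequencies in L after applying the difference operators
  F(y) \<mapsto> F(y + d) - exp (\<rho> (L!l) * d) F(y), l < i.\<close>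
definition exp_sum_diff :: "(nat \<Rightarrow> real) \<Rightarrow> (nat \<Rightarrow> real) \<Rightarrow> real \<Rightarrow> nat list \<Rightarrow> nat \<Rightarrow> real \<Rightarrow> real"
  where "exp_sum_diff c \<rho> d L i y =
    (\<Sum>j\<in>set L. c j * (\<Prod>l<i. exp (\<rho> j * d) - exp (\<rho> (L!l) * d)) * exp (\<rho> j * y))"

lemma exp_sum_diff_0: "exp_sum_diff c \<rho> d L 0 y = exp_sum c \<rho> (set L) y"
  by (simp add: exp_sum_diff_def exp_sum_def)

lemma exp_sum_diff_Suc:
  "exp_sum_diff c \<rho> d L (Suc i) y =
     exp_sum_diff c \<rho> d L i (y + d) - exp (\<rho> (L!i) * d) * exp_sum_diff c \<rho> d L i y"
proof -
  have "exp_sum_diff c \<rho> d L i (y + d) = (\<Sum>j\<in>set L.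
      c j * (\<Prod>l<i. exp (\<rho> j * d) - exp (\<rho> (L!l) * d)) * exp (\<rho> j * d) * exp (\<rho> j * y))"
    unfolding exp_sum_diff_def by (intro sum.cong refl) (simp add: distrib_left exp_add)
  also have "\<dots> = exp (\<rho> (L!i) * d) * exp_sum_diff c \<rho> d L i y + exp_sum_diff c \<rho> d L (Suc i) y"
    unfolding exp_sum_diff_def sum_distrib_left sum.distrib[symmetric]
    by (intro sum.cong refl) (simp add: algebra_simps)
  finally show ?thesis by simp
qed

lemma exp_sum_diff_length: "exp_sum_diff c \<rho> d L (length L) y = 0"
  unfolding exp_sum_diff_def
proof (intro sum.neutral ballI)
  fix j assume "j \<in> set L"
  then obtain l where "l < length L" "L ! l = j" by (auto simp: in_set_conv_nth)
  then have "(\<Prod>l<length L. exp (\<rho> j * d) - exp (\<rho> (L!l) * d)) = 0" by (intro prod_zero) auto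
  then show "c j * (\<Prod>l<length L. exp (\<rho> j * d) - exp (\<rho> (L!l) * d)) * exp (\<rho> j * y) = 0"
    by simp
qed

lemma exp_sum_extrapolation:
  assumes J: "finite J" "card J \<le> N" and A: "\<forall>j\<in>J. exp (\<rho> j * d) \<le> A" "0 \<le> A"
    and "1 \<le> \<Gamma>" and \<theta>: "A + 1 / \<Gamma> \<le> \<theta>"
    and samples: "\<And>k. k \<le> N \<Longrightarrow> \<bar>exp_sum c \<rho> J (y + real k * d)\<bar> \<le> H"
  shows "\<bar>exp_sum c \<rho> J (y + real n * d)\<bar> \<le> (1 + A) ^ N * \<Gamma> ^ N * \<theta> ^ n * H"
proof -
  define L where "L = sorted_list_of_set J"
  have set_L: "set L = J" and length_L: "length L = card J" using J by (auto simp: L_def)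
  define u where "u i k = exp_sum_diff c \<rho> d L i (y + real k * d)" for i k
  have "\<bar>u 0 n\<bar> \<le> (1 + A) ^ length L * \<Gamma> ^ length L * \<theta> ^ n * H"
  proof (rule recurrence_extrapolation_bound[where a = "\<lambda>i. exp (\<rho> (L!i) * d)"])
    show "u (Suc i) k = u i (Suc k) - exp (\<rho> (L!i) * d) * u i k" for i k
      unfolding u_def exp_sum_diff_Suc by (simp add: algebra_simps)
    show "u (length L) k = 0" for k
      unfolding u_def by (rule exp_sum_diff_length)
    show "\<bar>exp (\<rho> (L!i) * d)\<bar> \<le> A" if "i < length L" for i
      using A that set_L nth_mem by fastforce
    show "\<bar>u 0 k\<bar> \<le> H" if "k \<le> length L" for k
      using samples[of k] that J length_L by (simp add: u_def exp_sum_diff_0 set_L)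
  qed (use A \<open>1 \<le> \<Gamma>\<close> \<theta> in auto)
  also have "\<dots> \<le> (1 + A) ^ N * \<Gamma> ^ N * \<theta> ^ n * H"
  proof -
    have "0 \<le> H" using samples[of 0] by linarith
    moreover have "0 \<le> \<theta>" using \<theta> A \<open>1 \<le> \<Gamma>\<close> by (smt (verit) divide_nonneg_nonneg)
    ultimately show ?thesis
      using length_L J A \<open>1 \<le> \<Gamma>\<close>
      by (intro mult_right_mono mult_mono power_increasing) auto
  qed
  finally show ?thesis by (simp add: u_def exp_sum_diff_0 set_L)
qed

lemma exp_sum_le_forward_samples:
  assumes J: "finite J" "card J \<le> N" and \<rho>: "\<forall>j\<in>J. 0 \<le> \<rho> j" and "0 < \<sigma>"
  shows "\<bar>exp_sum c \<rho> J y\<bar> \<le> 2 ^ (2*N+1) * (\<Sum>l=1..N+1. \<bar>exp_sum c \<rho> J (y + real l * \<sigma>)\<bar>)"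
proof -
  define H where "H = (\<Sum>l=1..N+1. \<bar>exp_sum c \<rho> J (y + real l * \<sigma>)\<bar>)"
  have "\<bar>exp_sum c \<rho> J ((y + real (N+1) * \<sigma>) + real (N+1) * (-\<sigma>))\<bar> \<le> (1 + 1) ^ N * 1 ^ N * 2 ^ (N+1) * H"
  proof (rule exp_sum_extrapolation[OF J])
    show "\<forall>j\<in>J. exp (\<rho> j * - \<sigma>) \<le> 1" using \<rho> \<open>0 < \<sigma>\<close> by simp
    show "\<bar>exp_sum c \<rho> J ((y + real (N+1) * \<sigma>) + real k * - \<sigma>)\<bar> \<le> H" if "k \<le> N" for k
    proof -
      have "(y + real (N+1) * \<sigma>) + real k * - \<sigma> = y + real (N + 1 - k) * \<sigma>"
        using that by (simp add: algebra_simps of_nat_diff)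
      moreover have "\<bar>exp_sum c \<rho> J (y + real (N + 1 - k) * \<sigma>)\<bar> \<le> H"
        unfolding H_def using that
        by (intro member_le_sum[where f = "\<lambda>l. \<bar>exp_sum c \<rho> J (y + real l * \<sigma>)\<bar>"]) auto
      ultimately show ?thesis by (simp only:)
    qed
  qed auto
  moreover have "(2::real) ^ (2*N+1) = 2 ^ N * 2 ^ (N+1)"
    by (simp flip: power_add)
  ultimately show ?thesis by (simp add: H_def)
qed

lemma sum_powr_le_card_powr:
  fixes a :: "'a \<Rightarrow> real"
  assumes "finite S" and a: "\<And>x. x \<in> S \<Longrightarrow> 0 \<le> a x" and "0 < s"
  shows "(\<Sum>x\<in>S. a x) powr s \<le> real (card S) powr s * (\<Sum>x\<in>S. a x powr s)"
proof -
  define T where "T = (\<Sum>x\<in>S. a x powr s)"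
  have "a x \<le> T powr (1/s)" if "x \<in> S" for x
  proof -
    have "a x powr s \<le> T" unfolding T_def using \<open>finite S\<close> that by (intro member_le_sum) auto
    then have "(a x powr s) powr (1/s) \<le> T powr (1/s)" using \<open>0 < s\<close> by (intro powr_mono2) auto
    then show ?thesis using a[OF that] \<open>0 < s\<close> by (simp add: powr_powr)
  qed
  then have "(\<Sum>x\<in>S. a x) \<le> real (card S) * T powr (1/s)"
    using sum_mono[of S a "\<lambda>_. T powr (1/s)"] by simp
  then have "(\<Sum>x\<in>S. a x) powr s \<le> (real (card S) * T powr (1/s)) powr s"
    using a \<open>0 < s\<close> by (intro powr_mono2) (auto intro: sum_nonneg)
  also have "\<dots> = real (card S) powr s * T"
    using \<open>0 < s\<close> by (simp add: T_def powr_mult powr_powr sum_nonneg)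
  finally show ?thesis unfolding T_def .
qed

section \<open>Point values of exponential sums by local L^s means\<close>

lemma lborel_integral_affine_le:
  fixes g :: "real \<Rightarrow> real"
  assumes cont: "\<And>u. isCont g u" and nonneg: "\<And>u. 0 \<le> g u" and "1 \<le> l"
    and sub: "{y + l * \<delta> .. y + l * (2 * \<delta>)} \<subseteq> {a..b}"
  shows "(\<integral>\<sigma>. g (y + l * \<sigma>) * indicator {\<delta>..2*\<delta>} \<sigma> \<partial>lborel) \<le> (\<integral>u. g u * indicator {a..b} u \<partial>lborel)"
proof -
  define f where "f u = g u * indicator {y + l * \<delta> .. y + l * (2 * \<delta>)} u" for u
  have "(\<integral>u. f u \<partial>lborel) = \<bar>l\<bar> *\<^sub>R (\<integral>\<sigma>. f (y + l * \<sigma>) \<partial>lborel)"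
    using \<open>1 \<le> l\<close> by (intro lborel_integral_real_affine) simp
  also have "(\<lambda>\<sigma>. f (y + l * \<sigma>)) = (\<lambda>\<sigma>. g (y + l * \<sigma>) * indicator {\<delta>..2*\<delta>} \<sigma>)"
    using \<open>1 \<le> l\<close> by (auto simp: f_def indicator_def fun_eq_iff)
  finally have eq: "(\<integral>\<sigma>. g (y + l * \<sigma>) * indicator {\<delta>..2*\<delta>} \<sigma> \<partial>lborel) = (\<integral>u. f u \<partial>lborel) / l"
    using \<open>1 \<le> l\<close> by simp
  have "(\<integral>u. f u \<partial>lborel) \<le> (\<integral>u. g u * indicator {a..b} u \<partial>lborel)"
  proof (rule integral_mono)
    show "integrable lborel f" "integrable lborel (\<lambda>u. g u * indicator {a..b} u)"
      unfolding f_def by (auto intro: borel_integrable_atLeastAtMost cont)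
    show "f u \<le> g u * indicator {a..b} u" for u
    proof (cases "u \<in> {y + l * \<delta> .. y + l * (2 * \<delta>)}")
      case True
      then have "u \<in> {a..b}" using sub by blast
      with True show ?thesis by (simp add: f_def)
    next
      case False
      then have "f u = 0" by (simp add: f_def)
      then show ?thesis using nonneg[of u] by simp
    qed
  qed
  moreover have "(\<integral>u. f u \<partial>lborel) / l \<le> (\<integral>u. f u \<partial>lborel)"
  proof -
    have "0 \<le> (\<integral>u. f u \<partial>lborel)"
      unfolding f_def by (rule integral_nonneg_AE) (auto simp: nonneg indicator_def)
    then show ?thesis using \<open>1 \<le> l\<close> by (simp add: divide_le_eq mult_le_cancel_left1)
  qed
  ultimately show ?thesis using eq by linarith
qed

lemma le_integral_of_le_sum_samples:
  fixes g :: "real \<Rightarrow> real"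
  assumes cont: "\<And>u. isCont g u" and nonneg: "\<And>u. 0 \<le> g u" and "0 < \<delta>" "0 \<le> K"
    and le: "\<And>\<sigma>. \<sigma> \<in> {\<delta>..2*\<delta>} \<Longrightarrow> g y \<le> K * (\<Sum>l=1..m. g (y + real l * \<sigma>))"
    and range: "a \<le> y + \<delta>" "y + 2 * real m * \<delta> \<le> b"
  shows "\<delta> * g y \<le> K * real m * (\<integral>u. g u * indicator {a..b} u \<partial>lborel)"
proof -
  define I where "I = (\<integral>u. g u * indicator {a..b} u \<partial>lborel)"
  have int: "integrable lborel (\<lambda>\<sigma>. g (y + real l * \<sigma>) * indicator {\<delta>..2*\<delta>} \<sigma>)" for l
    by (rule borel_integrable_atLeastAtMost) (auto intro!: continuous_intros isCont_o2[OF _ cont])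
  have "\<delta> * g y = (\<integral>\<sigma>. g y * indicator {\<delta>..2*\<delta>} \<sigma> \<partial>lborel)"
    using \<open>0 < \<delta>\<close> by simp
  also have "\<dots> \<le> (\<integral>\<sigma>. K * (\<Sum>l=1..m. g (y + real l * \<sigma>) * indicator {\<delta>..2*\<delta>} \<sigma>) \<partial>lborel)"
  proof (rule integral_mono)
    show "integrable lborel (\<lambda>\<sigma>. g y * indicator {\<delta>..2*\<delta>} \<sigma>)"
      by (rule borel_integrable_atLeastAtMost) auto
    show "integrable lborel (\<lambda>\<sigma>. K * (\<Sum>l=1..m. g (y + real l * \<sigma>) * indicator {\<delta>..2*\<delta>} \<sigma>))"
      by (intro integrable_mult_right Bochner_Integration.integrable_sum int)
    show "g y * indicator {\<delta>..2*\<delta>} \<sigma> \<le> K * (\<Sum>l=1..m. g (y + real l * \<sigma>) * indicator {\<delta>..2*\<delta>} \<sigma>)"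
      for \<sigma>
      using le[of \<sigma>] by (cases "\<sigma> \<in> {\<delta>..2*\<delta>}") auto
  qed
  also have "\<dots> = K * (\<Sum>l=1..m. (\<integral>\<sigma>. g (y + real l * \<sigma>) * indicator {\<delta>..2*\<delta>} \<sigma> \<partial>lborel))"
    unfolding integral_mult_right_zero
    by (intro arg_cong[where f = "(*) K"] Bochner_Integration.integral_sum int)
  also have "\<dots> \<le> K * (\<Sum>l=1..m. I)"
  proof (intro mult_left_mono[OF _ \<open>0 \<le> K\<close>] sum_mono)
    fix l assume l: "l \<in> {1..m}"
    have "real l * \<delta> \<ge> \<delta>" "real l * (2 * \<delta>) \<le> 2 * real m * \<delta>"
      using l \<open>0 < \<delta>\<close> by (auto intro: mult_right_mono)
    then have "{y + real l * \<delta> .. y + real l * (2 * \<delta>)} \<subseteq> {a..b}" using range by auto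
    then show "(\<integral>\<sigma>. g (y + real l * \<sigma>) * indicator {\<delta>..2*\<delta>} \<sigma> \<partial>lborel) \<le> I"
      unfolding I_def using l by (intro lborel_integral_affine_le cont nonneg) auto
  qed
  finally show ?thesis by (simp add: I_def mult.assoc)
qed

text \<open>The factor (2^(2N+1) (N+1))^s comes from sampling with N + 1 points, the factor
  8 (N+1)^2 = (N+1)/\<delta> from averaging over sampling steps in [\<delta>, 2\<delta>], \<delta> = 1/(8(N+1)).\<close>
definition sampling_const :: "nat \<Rightarrow> real \<Rightarrow> real" where
  "sampling_const N s = (2 ^ (2*N+1) * real (N+1)) powr s * (8 * real (N+1) ^ 2)"

lemma sampling_const_pos: "0 < sampling_const N s"
  by (simp add: sampling_const_def)

lemma exp_sum_powr_le_integral: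
  assumes J: "finite J" "card J \<le> N" and \<rho>: "\<forall>j\<in>J. 0 \<le> \<rho> j" and "1 \<le> s"
    and y: "-1 \<le> y" "y \<le> -3/4"
  shows "\<bar>exp_sum c \<rho> J y\<bar> powr s
    \<le> sampling_const N s * (\<integral>u. \<bar>exp_sum c \<rho> J u\<bar> powr s * indicator {-1..-1/2} u \<partial>lborel)"
proof -
  define g where "g u = \<bar>exp_sum c \<rho> J u\<bar> powr s" for u
  define K where "K = (2 ^ (2*N+1) * real (N+1)) powr s"
  define \<delta> :: real where "\<delta> = 1 / (8 * real (N+1))"
  have cont: "isCont g u" for u
    unfolding g_def exp_sum_def using \<open>1 \<le> s\<close> by (intro continuous_intros) auto
  have samples: "g y \<le> K * (\<Sum>l=1..N+1. g (y + real l * \<sigma>))" if "0 < \<sigma>" for \<sigma>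
  proof -
    have "g y \<le> (2 ^ (2*N+1) * (\<Sum>l=1..N+1. \<bar>exp_sum c \<rho> J (y + real l * \<sigma>)\<bar>)) powr s"
      unfolding g_def using exp_sum_le_forward_samples[OF J \<rho> that] \<open>1 \<le> s\<close>
      by (intro powr_mono2) auto
    also have "\<dots> = (2 ^ (2*N+1)) powr s * (\<Sum>l=1..N+1. \<bar>exp_sum c \<rho> J (y + real l * \<sigma>)\<bar>) powr s"
      by (simp add: powr_mult sum_nonneg)
    also have "\<dots> \<le> (2 ^ (2*N+1)) powr s * (real (N+1) powr s * (\<Sum>l=1..N+1. g (y + real l * \<sigma>)))"
      unfolding g_def using \<open>1 \<le> s\<close>
      by (intro mult_left_mono order_trans[OF sum_powr_le_card_powr]) auto
    finally show ?thesis by (simp add: K_def powr_mult)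
  qed
  have \<delta>: "0 < \<delta>" "2 * real (N+1) * \<delta> = 1/4" by (simp_all add: \<delta>_def)
  have "\<delta> * g y \<le> K * real (N+1) * (\<integral>u. g u * indicator {-1..-1/2} u \<partial>lborel)"
  proof (rule le_integral_of_le_sum_samples[OF cont _ \<open>0 < \<delta>\<close>])
    show "g y \<le> K * (\<Sum>l=1..N+1. g (y + real l * \<sigma>))" if "\<sigma> \<in> {\<delta>..2*\<delta>}" for \<sigma>
      using that \<delta> by (intro samples) auto
    show "-1 \<le> y + \<delta>" "y + 2 * real (N+1) * \<delta> \<le> -1/2"
      using y \<delta> by linarith+
    show "0 \<le> g u" for u by (simp add: g_def)
    show "0 \<le> K" by (simp add: K_def)
  qed
  then have "g y \<le> K * real (N+1) * (\<integral>u. g u * indicator {-1..-1/2} u \<partial>lborel) / \<delta>"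
    using \<delta>(1) by (metis pos_le_divide_eq mult.commute)
  also have "\<dots> = sampling_const N s * (\<integral>u. g u * indicator {-1..-1/2} u \<partial>lborel)"
    by (simp add: K_def \<delta>_def sampling_const_def power2_eq_square)
  finally show ?thesis by (simp add: g_def)
qed


section \<open>Decay of exponential sums with frequencies at least 1\<close>

lemma nat_multiple_bracket:
  fixes x \<delta> :: real
  assumes "0 < \<delta>" "0 \<le> x"
  obtains n :: nat where "real n * \<delta> \<le> x" "x < real n * \<delta> + \<delta>"
proof
  define n where "n = nat \<lfloor>x / \<delta>\<rfloor>"
  have "real n \<le> x / \<delta>" "x / \<delta> < real n + 1"
    using assms by (simp_all add: n_def)
  then show "real n * \<delta> \<le> x" "x < real n * \<delta> + \<delta>"
    using assms by (simp_all add: le_divide_eq divide_less_eq distrib_right)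
qed

lemma exp_sum_decay_left:
  assumes J: "finite J" "card J \<le> N" and \<rho>: "\<forall>j\<in>J. 1 \<le> \<rho> j"
    and \<delta>: "0 < \<delta>" "real (N+1) * \<delta> \<le> 1/4"
    and H: "\<forall>u\<in>{-1..-3/4}. \<bar>exp_sum c \<rho> J u\<bar> \<le> H" and y: "y \<le> -3/4"
  shows "\<bar>exp_sum c \<rho> J y\<bar> \<le> (2 / (exp (-\<delta>/2) - exp (-\<delta>))) ^ N * exp ((1 + y) / 2) * H"
proof -
  define \<Gamma> where "\<Gamma> = 1 / (exp (-\<delta>/2) - exp (-\<delta>))"
  have "exp (-\<delta>) < exp (-\<delta>/2)" "exp (-\<delta>/2) \<le> 1" "0 < exp (-\<delta>)"
    using \<delta> by simp_all
  then have "0 < exp (-\<delta>/2) - exp (-\<delta>)" "exp (-\<delta>/2) - exp (-\<delta>) \<le> 1"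
    by linarith+
  then have "1 \<le> \<Gamma>" by (simp add: \<Gamma>_def)
  obtain n where n: "real n * \<delta> \<le> -3/4 - y" "-3/4 - y < real n * \<delta> + \<delta>"
    using nat_multiple_bracket[OF \<open>0 < \<delta>\<close>, of "-3/4 - y"] y by auto
  have "\<bar>exp_sum c \<rho> J ((y + real n * \<delta>) + real n * (-\<delta>))\<bar>
      \<le> (1 + exp (-\<delta>)) ^ N * \<Gamma> ^ N * exp (-\<delta>/2) ^ n * H"
  proof (rule exp_sum_extrapolation[OF J _ _ \<open>1 \<le> \<Gamma>\<close>])
    show "\<forall>j\<in>J. exp (\<rho> j * - \<delta>) \<le> exp (-\<delta>)" using \<rho> \<delta> by auto
    show "exp (-\<delta>) + 1 / \<Gamma> \<le> exp (-\<delta>/2)" by (simp add: \<Gamma>_def)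
    show "\<bar>exp_sum c \<rho> J ((y + real n * \<delta>) + real k * - \<delta>)\<bar> \<le> H" if "k \<le> N" for k
    proof -
      have "0 \<le> real k * \<delta>" "real k * \<delta> \<le> real N * \<delta>"
        using that \<delta> by (auto intro: mult_right_mono)
      moreover have "real N * \<delta> + \<delta> \<le> 1/4" using \<delta>(2) by (simp add: distrib_right)
      ultimately have "-1 \<le> y + real n * \<delta> - real k * \<delta>" "y + real n * \<delta> - real k * \<delta> \<le> -3/4"
        using n \<delta> by linarith+
      then show ?thesis using H by auto
    qed
  qed simp
  also have "\<dots> \<le> 2 ^ N * \<Gamma> ^ N * exp ((1 + y) / 2) * H"
  proof (intro mult_right_mono mult_mono)
    show "(1 + exp (-\<delta>)) ^ N \<le> 2 ^ N" using \<delta> by (intro power_mono) auto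
    have "exp (-\<delta>/2) ^ n = exp (- (real n * \<delta>) / 2)" by (simp add: exp_of_nat_mult[symmetric])
    also have "\<dots> \<le> exp ((1 + y) / 2)"
    proof -
      have "0 \<le> real N * \<delta>" "real N * \<delta> + \<delta> \<le> 1/4"
        using \<delta> by (simp_all add: distrib_right)
      then have "- (real n * \<delta>) \<le> 1 + y" using n by linarith
      then show ?thesis by simp
    qed
    finally show "exp (-\<delta>/2) ^ n \<le> exp ((1 + y) / 2)" .
    show "0 \<le> H" using H[rule_format, of "-1"] by (simp add: order_trans[OF abs_ge_zero])
  qed (use \<open>1 \<le> \<Gamma>\<close> in auto)
  also have "2 ^ N * \<Gamma> ^ N = (2 / (exp (-\<delta>/2) - exp (-\<delta>))) ^ N"
    unfolding \<Gamma>_def power_mult_distrib[symmetric] by simp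
  finally show ?thesis by (simp add: algebra_simps)
qed

lemma exp_sum_growth_right:
  assumes J: "finite J" "card J \<le> N" and \<rho>: "\<forall>j\<in>J. \<rho> j \<le> Q"
    and \<delta>: "0 < \<delta>" "real (N+1) * \<delta> \<le> 1/4" "1 \<le> real M * \<delta>"
    and H: "\<forall>u\<in>{-1..-3/4}. \<bar>exp_sum c \<rho> J u\<bar> \<le> H" and y: "-1 \<le> y" "y \<le> 0"
  shows "\<bar>exp_sum c \<rho> J y\<bar> \<le> (1 + exp (Q * \<delta>)) ^ (N + M) * H"
proof -
  define A where "A = exp (Q * \<delta>)"
  have "0 \<le> H" using H[rule_format, of "-1"] by (simp add: order_trans[OF abs_ge_zero])
  obtain n where n: "real n * \<delta> \<le> y + 1" "y + 1 < real n * \<delta> + \<delta>"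
    using nat_multiple_bracket[OF \<open>0 < \<delta>\<close>, of "y + 1"] y by auto
  have "\<bar>exp_sum c \<rho> J ((y - real n * \<delta>) + real n * \<delta>)\<bar> \<le> (1 + A) ^ N * 1 ^ N * (A + 1) ^ n * H"
  proof (rule exp_sum_extrapolation[OF J])
    show "\<forall>j\<in>J. exp (\<rho> j * \<delta>) \<le> A" using \<rho> \<delta> by (auto simp: A_def)
    show "\<bar>exp_sum c \<rho> J ((y - real n * \<delta>) + real k * \<delta>)\<bar> \<le> H" if "k \<le> N" for k
    proof -
      have "0 \<le> real k * \<delta>" "real k * \<delta> \<le> real N * \<delta>"
        using that \<delta> by (auto intro: mult_right_mono)
      moreover have "real N * \<delta> + \<delta> \<le> 1/4" using \<delta>(2) by (simp add: distrib_right)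
      ultimately have "-1 \<le> y - real n * \<delta> + real k * \<delta>" "y - real n * \<delta> + real k * \<delta> \<le> -3/4"
        using n \<delta> by linarith+
      then show ?thesis using H by auto
    qed
  qed (auto simp: A_def)
  also have "\<dots> \<le> (1 + A) ^ (N + M) * H"
  proof -
    have "real n * \<delta> \<le> real M * \<delta>" using n y \<delta> by linarith
    then have "n \<le> M" using \<delta> by simp
    then have "(1 + A) ^ n \<le> (1 + A) ^ M" by (intro power_increasing) (auto simp: A_def)
    then have "(1 + A) ^ N * (1 + A) ^ n \<le> (1 + A) ^ N * (1 + A) ^ M"
      by (intro mult_left_mono) (auto simp: A_def)
    then have "(1 + A) ^ N * 1 ^ N * (A + 1) ^ n * H \<le> (1 + A) ^ N * (1 + A) ^ M * H"
      using \<open>0 \<le> H\<close> by (intro mult_right_mono) (auto simp: add.commute)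
    then show ?thesis by (simp add: power_add)
  qed
  finally show ?thesis by (simp add: A_def)
qed

text \<open>With sampling step \<delta> = 1/(8N), the first summand controls the decay to the left of
  [-1, -3/4] and the second the growth to its right.\<close>
definition decay_const :: "nat \<Rightarrow> real \<Rightarrow> real" where
  "decay_const N Q = (let \<delta> = 1 / (8 * real N) in
     exp (1/2) * ((2 / (exp (-\<delta>/2) - exp (-\<delta>))) ^ N + (1 + exp (Q * \<delta>)) ^ (9 * N)))"

lemma decay_const_pos: "0 < decay_const N Q"
proof -
  define \<delta> where "\<delta> = 1 / (8 * real N)"
  have "0 \<le> \<delta>" by (simp add: \<delta>_def)
  then have "exp (-\<delta>) \<le> exp (-\<delta>/2)" by simp
  then show ?thesis
    unfolding decay_const_def Let_def \<delta>_def[symmetric]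
    by (intro mult_pos_pos add_nonneg_pos zero_le_power zero_less_power add_pos_pos divide_nonneg_nonneg) auto
qed

lemma exp_sum_le_decay:
  assumes J: "finite J" "card J \<le> N" and "1 \<le> N" and \<rho>: "\<forall>j\<in>J. 1 \<le> \<rho> j \<and> \<rho> j \<le> Q"
    and H: "\<forall>u\<in>{-1..-3/4}. \<bar>exp_sum c \<rho> J u\<bar> \<le> H" and "y \<le> 0"
  shows "\<bar>exp_sum c \<rho> J y\<bar> \<le> decay_const N Q * exp (y/2) * H"
proof -
  define \<delta> where "\<delta> = 1 / (8 * real N)"
  define D1 where "D1 = (2 / (exp (-\<delta>/2) - exp (-\<delta>))) ^ N"
  define D2 where "D2 = (1 + exp (Q * \<delta>)) ^ (9 * N)"
  have \<delta>: "0 < \<delta>" "real (N+1) * \<delta> \<le> 1/4" "1 \<le> real (8 * N) * \<delta>"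
    using \<open>1 \<le> N\<close> by (auto simp: \<delta>_def field_simps)
  have "exp (-\<delta>) \<le> exp (-\<delta>/2)" using \<delta> by simp
  then have "0 \<le> D1" "0 \<le> D2" by (simp_all add: D1_def D2_def add_nonneg_nonneg)
  have "0 \<le> H" using H[rule_format, of "-1"] by (simp add: order_trans[OF abs_ge_zero])
  have decay: "decay_const N Q * exp (y/2) = (D1 + D2) * exp ((1 + y) / 2)"
    by (simp add: decay_const_def Let_def D1_def D2_def \<delta>_def exp_add[symmetric] add_divide_distrib)
  show ?thesis
  proof (cases "y \<le> -3/4")
    case True
    then have "\<bar>exp_sum c \<rho> J y\<bar> \<le> D1 * exp ((1 + y) / 2) * H"
      unfolding D1_def using \<rho> by (intro exp_sum_decay_left[OF J _ \<delta>(1,2) H]) auto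
    also have "\<dots> \<le> (D1 + D2) * exp ((1 + y) / 2) * H"
      using \<open>0 \<le> D2\<close> \<open>0 \<le> H\<close> by (intro mult_right_mono) auto
    finally show ?thesis unfolding decay .
  next
    case False
    have "N + 8 * N = 9 * N" by simp
    with False have "\<bar>exp_sum c \<rho> J y\<bar> \<le> D2 * H"
      unfolding D2_def using exp_sum_growth_right[OF J _ \<delta> H] \<rho> \<open>y \<le> 0\<close> by simp
    also have "\<dots> \<le> (D1 + D2) * exp ((1 + y) / 2) * H"
    proof -
      have "1 \<le> exp ((1 + y) / 2)" using False by simp
      then have "D2 * 1 \<le> (D1 + D2) * exp ((1 + y) / 2)"
        using \<open>0 \<le> D1\<close> \<open>0 \<le> D2\<close> by (intro mult_mono) auto
      then show ?thesis using \<open>0 \<le> H\<close> by (intro mult_right_mono) auto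
    qed
    finally show ?thesis unfolding decay .
  qed
qed


section \<open>Muntz polynomials\<close>

definition muntz_poly :: "(nat \<Rightarrow> real) \<Rightarrow> (nat \<Rightarrow> real) \<Rightarrow> nat set \<Rightarrow> real \<Rightarrow> real" where
  "muntz_poly c lam J t = (\<Sum>j\<in>J. c j * t powr lam j)"

lemma muntz_poly_measurable [measurable]: "muntz_poly c lam J \<in> borel_measurable borel"
  unfolding muntz_poly_def by measurable

lemma muntz_poly_eq_exp_sum:
  "0 < t \<Longrightarrow> 0 < l \<Longrightarrow> muntz_poly c lam J t = exp_sum c (\<lambda>j. lam j / l) J (l * ln t)"
  unfolding muntz_poly_def exp_sum_def powr_def by (intro sum.cong) auto

lemma abs_muntz_poly_le:
  assumes "0 \<le> t" "t \<le> 1" "\<forall>j\<in>J. 0 \<le> lam j"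
  shows "\<bar>muntz_poly c lam J t\<bar> \<le> (\<Sum>j\<in>J. \<bar>c j\<bar>)"
proof -
  have "\<bar>muntz_poly c lam J t\<bar> \<le> (\<Sum>j\<in>J. \<bar>c j * t powr lam j\<bar>)"
    unfolding muntz_poly_def by (rule sum_abs)
  also have "\<dots> \<le> (\<Sum>j\<in>J. \<bar>c j\<bar>)"
  proof (intro sum_mono)
    fix j assume "j \<in> J"
    then have "t powr lam j \<le> 1" using assms by (intro powr_le1) auto
    then show "\<bar>c j * t powr lam j\<bar> \<le> \<bar>c j\<bar>" by (simp add: abs_mult mult_left_le)
  qed
  finally show ?thesis .
qed

lemma integrable_weight:
  fixes \<alpha> :: real
  assumes "-1 < \<alpha>"
  shows "integrable lborel (\<lambda>x. (1 - x) powr \<alpha> * indicator {0..1} x)"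
proof -
  have "(\<lambda>x. x powr \<alpha>) absolutely_integrable_on {0..1::real}"
    by (intro nonnegative_absolutely_integrable_1 integrable_on_powr_from_0) (use assms in auto)
  then have "integrable lebesgue (\<lambda>x::real. indicator {0..1} x *\<^sub>R x powr \<alpha>)"
    by (simp add: set_integrable_def)
  then have "integrable lborel (\<lambda>x::real. indicator {0..1} x *\<^sub>R x powr \<alpha>)"
    by (subst (asm) integrable_completion) auto
  then have "integrable lborel (\<lambda>x. (\<lambda>x::real. indicator {0..1} x *\<^sub>R x powr \<alpha>) (1 + (-1) * x))"
    by (rule lborel_integrable_real_affine) simp
  then show ?thesis by (simp add: indicator_def mult.commute conj_commute)
qed

lemma integrable_muntz_poly_weighted:
  assumes "-1 < \<alpha>" "\<forall>j\<in>J. 0 \<le> lam j" "0 < s"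
  shows "integrable lborel (\<lambda>x. \<bar>muntz_poly c lam J x\<bar> powr s * (1 - x) powr \<alpha> * indicator {0..1} x)"
proof (rule Bochner_Integration.integrable_bound)
  show "integrable lborel (\<lambda>x. (\<Sum>j\<in>J. \<bar>c j\<bar>) powr s * ((1 - x) powr \<alpha> * indicator {0..1} x))"
    using integrable_weight[OF assms(1)] by (rule integrable_mult_right)
  show "AE x in lborel. norm (\<bar>muntz_poly c lam J x\<bar> powr s * (1 - x) powr \<alpha> * indicator {0..1} x)
      \<le> norm ((\<Sum>j\<in>J. \<bar>c j\<bar>) powr s * ((1 - x) powr \<alpha> * indicator {0..1} x))"
  proof (intro AE_I2)
    fix x :: real
    show "norm (\<bar>muntz_poly c lam J x\<bar> powr s * (1 - x) powr \<alpha> * indicator {0..1} x)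
      \<le> norm ((\<Sum>j\<in>J. \<bar>c j\<bar>) powr s * ((1 - x) powr \<alpha> * indicator {0..1} x))"
    proof (cases "x \<in> {0..1}")
      case True
      then have "\<bar>muntz_poly c lam J x\<bar> powr s \<le> (\<Sum>j\<in>J. \<bar>c j\<bar>) powr s"
        using assms by (intro powr_mono2 abs_muntz_poly_le) auto
      then show ?thesis using True by (simp add: mult_right_mono)
    qed simp
  qed
qed measurable

lemma window_distance_bounds:
  fixes l x :: real
  assumes "1 \<le> l" and x: "exp (-1/l) \<le> x" "x \<le> exp (-1/(2*l))"
  shows "1/4 \<le> l * (1 - x)" "l * (1 - x) \<le> 1"
proof -
  have "1 - 1/l \<le> x" using exp_ge_add_one_self[of "-1/l"] x(1) by simp
  then show "l * (1 - x) \<le> 1" using \<open>1 \<le> l\<close> by (simp add: field_simps)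
  define u where "u = 1/(2*l)"
  have u: "0 < u" "u \<le> 1/2" unfolding u_def using \<open>1 \<le> l\<close> by (auto simp: field_simps)
  have "1 / exp u \<le> 1 / (1 + u)"
    using exp_ge_add_one_self[of u] u by (intro divide_left_mono) auto
  with x(2) have "x \<le> 1 / (1 + u)" by (simp add: u_def exp_minus inverse_eq_divide)
  then have "u / (1 + u) \<le> 1 - x" using u by (simp add: field_simps)
  moreover have "u / 2 \<le> u / (1 + u)" using u by (intro divide_left_mono) auto
  ultimately have "u / 2 \<le> 1 - x" by linarith
  then show "1/4 \<le> l * (1 - x)" using \<open>1 \<le> l\<close> by (simp add: u_def field_simps)
qed

lemma one_le_four_powr_mult_powr:
  fixes v \<alpha> :: real
  assumes "1/4 \<le> v" "v \<le> 1"
  shows "1 \<le> 4 powr \<bar>\<alpha>\<bar> * v powr \<alpha>"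
proof (cases "0 \<le> \<alpha>")
  case True
  have "4 powr \<alpha> * (1/4) powr \<alpha> \<le> 4 powr \<alpha> * v powr \<alpha>"
    using assms True by (intro mult_left_mono powr_mono2) auto
  moreover have "4 powr \<alpha> * (1/4) powr \<alpha> = 1" by (simp add: powr_divide)
  ultimately show ?thesis using True by simp
next
  case False
  have "1 powr \<alpha> \<le> v powr \<alpha>" using assms False by (intro powr_mono2') auto
  moreover have "1 \<le> 4 powr \<bar>\<alpha>\<bar>" by (rule ge_one_powr_ge_zero) auto
  ultimately have "1 * 1 \<le> 4 powr \<bar>\<alpha>\<bar> * v powr \<alpha>" by (intro mult_mono) auto
  then show ?thesis by simp
qed


lemma integral_exp_substitution_le:
  fixes \<phi> :: "real \<Rightarrow> real" and l :: real
  assumes cont: "\<And>x. 0 < x \<Longrightarrow> isCont \<phi> x" and nonneg: "\<And>x. 0 \<le> \<phi> x" and "1 \<le> l"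
  shows "(\<integral>u. \<phi> (exp (u / l)) * indicator {-1..-1/2} u \<partial>lborel)
    \<le> exp 1 * l * (\<integral>x. \<phi> x * indicator {exp (-1/l)..exp (-1/(2*l))} x \<partial>lborel)"
proof -
  define g where "g y = exp (y / l)" for y
  define g' where "g' y = exp (y / l) / l" for y
  have "0 < l" using \<open>1 \<le> l\<close> by simp
  have "integrable lborel (\<lambda>x. \<phi> x * indicator {g (-1)..g (-1/2)} x)"
    using cont by (intro borel_integrable_atLeastAtMost) (auto simp: g_def intro: less_le_trans[OF exp_gt_zero])
  then have "set_integrable lborel {g (-1)..g (-1/2)} \<phi>"
    by (simp add: set_integrable_def mult.commute)
  moreover have "(g has_real_derivative g' x) (at x)" for x
    unfolding g_def g'_def using \<open>0 < l\<close> by (auto intro!: derivative_eq_intros)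
  moreover have "continuous_on {-1..-1/2} g'"
    unfolding g'_def using \<open>0 < l\<close> by (intro continuous_intros) auto
  moreover have nonneg': "0 \<le> g' x" for x unfolding g'_def using \<open>0 < l\<close> by simp
  ultimately have subst:
    "set_integrable lborel {-1..-1/2} (\<lambda>x. \<phi> (g x) * g' x)"
    "(\<integral>x. \<phi> x * indicator {g (-1)..g (-1/2)} x \<partial>lborel)
      = (\<integral>x. \<phi> (g x) * g' x * indicator {-1..-1/2} x \<partial>lborel)"
    using integral_substitution[where g = g and a = "-1" and b = "-1/2" and f = \<phi> and g' = g']
    by auto
  have "(\<integral>u. \<phi> (g u) * indicator {-1..-1/2} u \<partial>lborel)
      \<le> (\<integral>u. (exp 1 * l) * (\<phi> (g u) * g' u * indicator {-1..-1/2} u) \<partial>lborel)"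
  proof (rule integral_mono')
    show "integrable lborel (\<lambda>u. (exp 1 * l) * (\<phi> (g u) * g' u * indicator {-1..-1/2} u))"
      using subst(1) by (intro integrable_mult_right) (simp add: set_integrable_def mult.commute)
    show "\<phi> (g u) * indicator {-1..-1/2} u \<le> (exp 1 * l) * (\<phi> (g u) * g' u * indicator {-1..-1/2} u)"
      for u
    proof (cases "u \<in> {-1..-1/2}")
      case True
      then have "-1 \<le> u / l" using \<open>1 \<le> l\<close> by (simp add: field_simps)
      then have "1 \<le> exp 1 * l * g' u" using \<open>0 < l\<close> by (simp add: g'_def flip: exp_add)
      then have "\<phi> (g u) * 1 \<le> \<phi> (g u) * (exp 1 * l * g' u)"
        using nonneg by (intro mult_left_mono) auto
      then show ?thesis using True by (simp add: algebra_simps)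
    qed simp
    show "0 \<le> (exp 1 * l) * (\<phi> (g u) * g' u * indicator {-1..-1/2} u)" for u
      using \<open>0 < l\<close> nonneg nonneg'[of u] by simp
  qed
  also have "\<dots> = exp 1 * l * (\<integral>x. \<phi> x * indicator {g (-1)..g (-1/2)} x \<partial>lborel)"
    using subst(2) by simp
  finally show ?thesis by (simp add: g_def)
qed

lemma integral_exp_sum_le_integral_muntz_poly:
  fixes l s :: real
  assumes "1 \<le> l" "0 < s"
  shows "(\<integral>u. \<bar>exp_sum c (\<lambda>j. lam j / l) J u\<bar> powr s * indicator {-1..-1/2} u \<partial>lborel)
    \<le> exp 1 * l * (\<integral>x. \<bar>muntz_poly c lam J x\<bar> powr s * indicator {exp (-1/l)..exp (-1/(2*l))} x \<partial>lborel)"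
proof -
  have "continuous_on {0<..} (\<lambda>x. \<bar>muntz_poly c lam J x\<bar> powr s)"
    unfolding muntz_poly_def using \<open>0 < s\<close> by (intro continuous_on_powr' continuous_intros) auto
  then have "isCont (\<lambda>x. \<bar>muntz_poly c lam J x\<bar> powr s) x" if "0 < x" for x
    using that by (simp add: continuous_on_eq_continuous_at)
  moreover have "\<bar>exp_sum c (\<lambda>j. lam j / l) J u\<bar> = \<bar>muntz_poly c lam J (exp (u / l))\<bar>" for u
    using muntz_poly_eq_exp_sum[of "exp (u / l)" l c lam J] \<open>1 \<le> l\<close> by simp
  ultimately show ?thesis
    using integral_exp_substitution_le[where \<phi> = "\<lambda>x. \<bar>muntz_poly c lam J x\<bar> powr s", OF _ _ \<open>1 \<le> l\<close>]
    by simp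
qed

lemma integral_muntz_poly_window_le:
  fixes l s \<alpha> :: real
  assumes "1 \<le> l" "\<forall>j\<in>J. 0 \<le> lam j" "0 < s" "-1 < \<alpha>"
  shows "(\<integral>x. \<bar>muntz_poly c lam J x\<bar> powr s * indicator {exp (-1/l)..exp (-1/(2*l))} x \<partial>lborel)
    \<le> 4 powr \<bar>\<alpha>\<bar> * l powr \<alpha> * wLp_norm \<alpha> s (muntz_poly c lam J) powr s"
proof -
  define \<phi> where "\<phi> x = \<bar>muntz_poly c lam J x\<bar> powr s" for x
  define I where "I = (\<integral>x. \<phi> x * (1 - x) powr \<alpha> * indicator {0..1} x \<partial>lborel)"
  have "(\<integral>x. \<phi> x * indicator {exp (-1/l)..exp (-1/(2*l))} x \<partial>lborel)
      \<le> (\<integral>x. (4 powr \<bar>\<alpha>\<bar> * l powr \<alpha>) * (\<phi> x * (1 - x) powr \<alpha> * indicator {0..1} x) \<partial>lborel)"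
  proof (rule integral_mono')
    show "integrable lborel (\<lambda>x. (4 powr \<bar>\<alpha>\<bar> * l powr \<alpha>) * (\<phi> x * (1 - x) powr \<alpha> * indicator {0..1} x))"
      unfolding \<phi>_def using integrable_muntz_poly_weighted assms by (intro integrable_mult_right) auto
    show "\<phi> x * indicator {exp (-1/l)..exp (-1/(2*l))} x
        \<le> (4 powr \<bar>\<alpha>\<bar> * l powr \<alpha>) * (\<phi> x * (1 - x) powr \<alpha> * indicator {0..1} x)" for x
    proof (cases "x \<in> {exp (-1/l)..exp (-1/(2*l))}")
      case True
      then have d: "1/4 \<le> l * (1 - x)" "l * (1 - x) \<le> 1"
        using window_distance_bounds[OF \<open>1 \<le> l\<close>] by auto
      have "x \<le> exp (-1/(2*l))" using True by simp
      also have "\<dots> < 1" using \<open>1 \<le> l\<close> by simp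
      finally have "x \<in> {0..1}" using True by (auto intro: order_trans[OF exp_ge_zero])
      have "1 \<le> 4 powr \<bar>\<alpha>\<bar> * (l * (1 - x)) powr \<alpha>" using d by (rule one_le_four_powr_mult_powr)
      also have "\<dots> = 4 powr \<bar>\<alpha>\<bar> * l powr \<alpha> * (1 - x) powr \<alpha>"
        using \<open>1 \<le> l\<close> \<open>x \<in> {0..1}\<close> by (simp add: powr_mult)
      finally have "\<phi> x * 1 \<le> \<phi> x * (4 powr \<bar>\<alpha>\<bar> * l powr \<alpha> * (1 - x) powr \<alpha>)"
        by (intro mult_left_mono) (auto simp: \<phi>_def)
      then show ?thesis using True \<open>x \<in> {0..1}\<close> by (simp add: algebra_simps)
    qed (simp add: \<phi>_def)
    show "0 \<le> (4 powr \<bar>\<alpha>\<bar> * l powr \<alpha>) * (\<phi> x * (1 - x) powr \<alpha> * indicator {0..1} x)" for x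
      by (simp add: \<phi>_def)
  qed
  also have "\<dots> = 4 powr \<bar>\<alpha>\<bar> * l powr \<alpha> * I" by (simp add: I_def)
  also have "I = wLp_norm \<alpha> s (muntz_poly c lam J) powr s"
  proof -
    have "0 \<le> I" unfolding I_def \<phi>_def by (intro integral_nonneg_AE) (auto simp: indicator_def)
    then show ?thesis
      using \<open>0 < s\<close> by (simp add: wLp_norm_def set_lebesgue_integral_def powr_powr I_def \<phi>_def mult.commute)
  qed
  finally show ?thesis by (simp add: \<phi>_def)
qed


lemma powr_le_imp_le_base:
  fixes x H s :: real
  assumes "x powr s \<le> H powr s" "0 \<le> x" "0 \<le> H" "0 < s"
  shows "x \<le> H"
  using assms by (meson not_le powr_less_mono2)

lemma integral_exp_sum_le_wLp_norm:
  fixes l s \<alpha> :: real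
  assumes "1 \<le> l" "\<forall>j\<in>J. 0 \<le> lam j" "1 \<le> s" "-1 < \<alpha>"
  shows "(\<integral>u. \<bar>exp_sum c (\<lambda>j. lam j / l) J u\<bar> powr s * indicator {-1..-1/2} u \<partial>lborel)
    \<le> exp 1 * 4 powr \<bar>\<alpha>\<bar> * l powr (1 + \<alpha>) * wLp_norm \<alpha> s (muntz_poly c lam J) powr s"
proof -
  define W where "W = wLp_norm \<alpha> s (muntz_poly c lam J)"
  have "(\<integral>u. \<bar>exp_sum c (\<lambda>j. lam j / l) J u\<bar> powr s * indicator {-1..-1/2} u \<partial>lborel)
      \<le> exp 1 * l * (\<integral>x. \<bar>muntz_poly c lam J x\<bar> powr s * indicator {exp (-1/l)..exp (-1/(2*l))} x \<partial>lborel)"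
    using assms by (intro integral_exp_sum_le_integral_muntz_poly) auto
  also have "\<dots> \<le> exp 1 * l * (4 powr \<bar>\<alpha>\<bar> * l powr \<alpha> * W powr s)"
    unfolding W_def using assms by (intro mult_left_mono integral_muntz_poly_window_le) auto
  also have "\<dots> = exp 1 * 4 powr \<bar>\<alpha>\<bar> * l powr (1 + \<alpha>) * W powr s"
    using \<open>1 \<le> l\<close> by (simp add: powr_add)
  finally show ?thesis by (simp add: W_def)
qed

lemma exp_sum_le_wLp_norm:
  fixes l s \<alpha> u :: real
  assumes J: "finite J" "card J \<le> N" and "1 \<le> l" "\<forall>j\<in>J. l \<le> lam j" "1 \<le> s" "-1 < \<alpha>"
    and u: "-1 \<le> u" "u \<le> -3/4"
  shows "\<bar>exp_sum c (\<lambda>j. lam j / l) J u\<bar> \<le> (sampling_const N s * exp 1 * 4 powr \<bar>\<alpha>\<bar>) powr (1/s)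
    * l powr ((1 + \<alpha>) / s) * wLp_norm \<alpha> s (muntz_poly c lam J)"
    (is "_ \<le> ?H")
proof -
  define W where "W = wLp_norm \<alpha> s (muntz_poly c lam J)"
  define K where "K = sampling_const N s * exp 1 * 4 powr \<bar>\<alpha>\<bar>"
  have "0 \<le> W" unfolding W_def wLp_norm_def by (rule powr_ge_zero)
  have "0 < K" unfolding K_def using sampling_const_pos[of N s] by simp
  have lam: "\<forall>j\<in>J. 0 \<le> lam j" "\<forall>j\<in>J. 0 \<le> lam j / l" using assms by force+
  have "\<bar>exp_sum c (\<lambda>j. lam j / l) J u\<bar> powr s
      \<le> sampling_const N s * (\<integral>u. \<bar>exp_sum c (\<lambda>j. lam j / l) J u\<bar> powr s * indicator {-1..-1/2} u \<partial>lborel)"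
    using J lam(2) \<open>1 \<le> s\<close> u by (rule exp_sum_powr_le_integral)
  also have "\<dots> \<le> sampling_const N s * (exp 1 * 4 powr \<bar>\<alpha>\<bar> * l powr (1 + \<alpha>) * W powr s)"
    unfolding W_def using assms lam(1) sampling_const_pos[of N s]
    by (intro mult_left_mono integral_exp_sum_le_wLp_norm) auto
  also have "\<dots> = K * l powr (1 + \<alpha>) * W powr s" by (simp add: K_def mult_ac)
  also have "\<dots> = ?H powr s"
  proof -
    have "1/s * s = 1" "(1 + \<alpha>) / s * s = 1 + \<alpha>" using \<open>1 \<le> s\<close> by auto
    moreover have "?H = K powr (1/s) * l powr ((1 + \<alpha>) / s) * W" by (simp add: K_def W_def)
    ultimately show ?thesis
      using \<open>0 < K\<close> \<open>1 \<le> l\<close> \<open>0 \<le> W\<close> by (simp only:) (simp add: powr_mult powr_powr)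
  qed
  finally show ?thesis
    by (rule powr_le_imp_le_base) (use \<open>0 \<le> W\<close> \<open>1 \<le> s\<close> in \<open>auto simp: W_def\<close>)
qed

lemma muntz_poly_pointwise_bound:
  assumes J: "finite J" "card J \<le> N" and "1 \<le> N" "1 \<le> l"
    and lam: "\<forall>j\<in>J. l \<le> lam j \<and> lam j \<le> Q * l" and "1 \<le> s" "-1 < \<alpha>" and t: "0 \<le> t" "t \<le> 1"
  shows "\<bar>muntz_poly c lam J t\<bar> \<le> decay_const N Q * (sampling_const N s * exp 1 * 4 powr \<bar>\<alpha>\<bar>) powr (1/s)
    * l powr ((1 + \<alpha>) / s) * wLp_norm \<alpha> s (muntz_poly c lam J) * t powr (l/2)"
proof -
  define \<rho> where "\<rho> = (\<lambda>j. lam j / l)"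
  define H where "H = (sampling_const N s * exp 1 * 4 powr \<bar>\<alpha>\<bar>) powr (1/s)
    * l powr ((1 + \<alpha>) / s) * wLp_norm \<alpha> s (muntz_poly c lam J)"
  have "0 < l" using \<open>1 \<le> l\<close> by simp
  have "0 \<le> H" unfolding H_def wLp_norm_def by simp
  have \<rho>: "\<forall>j\<in>J. 1 \<le> \<rho> j \<and> \<rho> j \<le> Q"
    using lam \<open>0 < l\<close> by (auto simp: \<rho>_def le_divide_eq divide_le_eq)
  have sup: "\<forall>u\<in>{-1..-3/4}. \<bar>exp_sum c \<rho> J u\<bar> \<le> H"
    unfolding \<rho>_def H_def using assms by (auto intro!: exp_sum_le_wLp_norm[OF J])
  show ?thesis
  proof (cases "t = 0")
    case True
    then show ?thesis
      using \<open>0 \<le> H\<close> decay_const_pos[of N Q] by (simp add: muntz_poly_def H_def)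
  next
    case False
    with t have "0 < t" by simp
    have "\<bar>muntz_poly c lam J t\<bar> = \<bar>exp_sum c \<rho> J (l * ln t)\<bar>"
      using muntz_poly_eq_exp_sum[OF \<open>0 < t\<close> \<open>0 < l\<close>] by (simp add: \<rho>_def)
    also have "\<dots> \<le> decay_const N Q * exp (l * ln t / 2) * H"
      using t \<open>0 < t\<close> \<open>0 < l\<close> \<rho> sup
      by (intro exp_sum_le_decay[OF J \<open>1 \<le> N\<close>]) (auto simp: mult_nonneg_nonpos)
    also have "exp (l * ln t / 2) = t powr (l/2)"
      using \<open>0 < t\<close> by (simp add: powr_def)
    finally show ?thesis by (simp add: H_def mult_ac)
  qed
qed


section \<open>Moments of measures in M_{x^\<beta>}\<close>

lemma summable_exp_half_mult_powr:
  fixes \<beta> :: real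
  shows "summable (\<lambda>i::nat. exp (- real i / 2) * (real i + 1) powr \<beta>)"
proof (rule summable_comparison_test_bigo)
  have geometric: "(\<lambda>i::nat. exp (- real i / 4)) = (\<lambda>i. exp (- 1/4) ^ i)"
    by (auto simp: exp_of_nat_mult[symmetric] fun_eq_iff)
  show "summable (\<lambda>i::nat. norm (exp (- 1/4::real) ^ i))" by simp
  have "(\<lambda>i::nat. exp (- real i / 2) * (real i + 1) powr \<beta>) \<in> O(\<lambda>i. exp (- real i / 4))"
    by real_asymp
  then show "(\<lambda>i::nat. exp (- real i / 2) * (real i + 1) powr \<beta>) \<in> O(\<lambda>i. exp (- 1/4::real) ^ i)"
    by (simp only: geometric)
qed

definition moment_const :: "real \<Rightarrow> real \<Rightarrow> real" where
  "moment_const \<beta> Cmu = max 0 Cmu * (\<Sum>i. exp (- real i / 2) * (real i + 1) powr \<beta>)"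

lemma moment_const_nonneg: "0 \<le> moment_const \<beta> Cmu"
  unfolding moment_const_def using summable_exp_half_mult_powr[of \<beta>]
  by (intro mult_nonneg_nonneg suminf_nonneg) auto

lemma in_M_betaD:
  assumes M: "in_M_beta \<beta> Cmu \<mu>" and "0 < \<beta>"
  shows "sets \<mu> = sets borel" "space \<mu> = UNIV" "finite_measure \<mu>" "AE x in \<mu>. x \<in> {0..1}"
    and "\<And>\<epsilon>. 0 < \<epsilon> \<Longrightarrow> measure \<mu> {1-\<epsilon>..1} \<le> max 0 Cmu * \<epsilon> powr \<beta>"
proof -
  have sets: "sets \<mu> = sets borel" and null: "emeasure \<mu> (- {0..1}) = 0"
    and tail: "\<forall>\<epsilon>\<in>{0<..1}. emeasure \<mu> {1 - \<epsilon>..1} \<le> ennreal (Cmu * \<epsilon> powr \<beta>)"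
    using M unfolding in_M_beta_def by auto
  show "sets \<mu> = sets borel" by (rule sets)
  show space: "space \<mu> = UNIV" using sets_eq_imp_space_eq[OF sets] by simp
  have "emeasure \<mu> UNIV = emeasure \<mu> {0..1} + emeasure \<mu> (-{0..1})"
    using sets by (subst plus_emeasure) auto
  also have "\<dots> \<le> ennreal Cmu" using tail[rule_format, of 1] null by simp
  finally have "emeasure \<mu> (space \<mu>) \<noteq> \<infinity>" using space by (auto simp: top_unique)
  then show fin: "finite_measure \<mu>" by (rule finite_measureI)
  show "AE x in \<mu>. x \<in> {0..1}"
    using null sets by (intro AE_I[where N = "-{0..1}"]) auto
  have le1: "measure \<mu> {1-\<epsilon>..1} \<le> max 0 Cmu * \<epsilon> powr \<beta>" if "0 < \<epsilon>" "\<epsilon> \<le> 1" for \<epsilon>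
  proof -
    have "ennreal (measure \<mu> {1-\<epsilon>..1}) = emeasure \<mu> {1-\<epsilon>..1}"
      using finite_measure.emeasure_eq_measure[OF fin] by simp
    also have "\<dots> \<le> ennreal (Cmu * \<epsilon> powr \<beta>)" using tail that by auto
    also have "\<dots> \<le> ennreal (max 0 Cmu * \<epsilon> powr \<beta>)" by (intro ennreal_leI mult_right_mono) auto
    finally show ?thesis by (subst (asm) ennreal_le_iff) auto
  qed
  show "measure \<mu> {1-\<epsilon>..1} \<le> max 0 Cmu * \<epsilon> powr \<beta>" if "0 < \<epsilon>" for \<epsilon>
  proof (cases "\<epsilon> \<le> 1")
    case False
    have "measure \<mu> {1-\<epsilon>..1} \<le> measure \<mu> ({0..1} \<union> -{0..1})"
      using sets by (intro finite_measure.finite_measure_mono[OF fin]) auto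
    also have "\<dots> \<le> measure \<mu> {0..1} + measure \<mu> (-{0..1})"
      using sets by (intro measure_Un_le) auto
    also have "\<dots> = measure \<mu> {1-1..1}" using null by (simp add: measure_def)
    also have "\<dots> \<le> max 0 Cmu * 1 powr \<beta>" by (rule le1) auto
    also have "\<dots> \<le> max 0 Cmu * \<epsilon> powr \<beta>"
      using False \<open>0 < \<beta>\<close> by (intro mult_left_mono powr_mono2) auto
    finally show ?thesis .
  qed (use le1 that in auto)
qed

text \<open>On the layer 1 - t \<in> [i/l, (i+1)/l) one has t^(l/2) \<le> e^(-i/2).\<close>
lemma powr_half_le_layer_sum:
  fixes l t :: real
  assumes "1 \<le> l"
  shows "t powr (l/2) * indicator {0..1} t
    \<le> (\<Sum>i\<le>nat \<lceil>l\<rceil>. exp (- real i / 2) * indicator {1 - (real i + 1) / l .. 1} t)"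
proof (cases "t \<in> {0..1}")
  case False
  then show ?thesis by (simp add: sum_nonneg)
next
  case True
  define i where "i = nat \<lfloor>l * (1 - t)\<rfloor>"
  have "0 \<le> l * (1 - t)" using True \<open>1 \<le> l\<close> by simp
  then have i: "real i \<le> l * (1 - t)" "l * (1 - t) < real i + 1" unfolding i_def by linarith+
  have "l * (1 - t) \<le> l" using True \<open>1 \<le> l\<close> by (simp add: mult_left_le)
  then have "i \<le> nat \<lceil>l\<rceil>" using i(1) by linarith
  have "t \<in> {1 - (real i + 1) / l .. 1}"
    using i(2) True \<open>1 \<le> l\<close> by (simp add: field_simps)
  have "t powr (l/2) \<le> exp (- real i / 2)"
  proof (cases "t = 0")
    case False
    with True have "0 < t" by simp
    have "l / 2 * ln t \<le> l / 2 * (t - 1)"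
      using ln_le_minus_one[OF \<open>0 < t\<close>] \<open>1 \<le> l\<close> by (intro mult_left_mono) auto
    also have "\<dots> \<le> - real i / 2" using i(1) by (simp add: algebra_simps)
    finally show ?thesis using \<open>0 < t\<close> by (simp add: powr_def)
  qed simp
  then have "t powr (l/2) * indicator {0..1} t \<le> exp (- real i / 2) * indicator {1 - (real i + 1) / l .. 1} t"
    using True \<open>t \<in> {1 - (real i + 1) / l .. 1}\<close> by simp
  also have "\<dots> \<le> (\<Sum>i\<le>nat \<lceil>l\<rceil>. exp (- real i / 2) * indicator {1 - (real i + 1) / l .. 1} t)"
    using \<open>i \<le> nat \<lceil>l\<rceil>\<close>
    by (intro member_le_sum[where f = "\<lambda>i. exp (- real i / 2) * indicator {1 - (real i + 1) / l .. 1} t"])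
      auto
  finally show ?thesis .
qed


lemma integral_powr_half_le_moment_const:
  assumes M: "in_M_beta \<beta> Cmu \<mu>" "0 < \<beta>" and "1 \<le> l"
  shows "(\<integral>t. t powr (l/2) * indicator {0..1} t \<partial>\<mu>) \<le> moment_const \<beta> Cmu * l powr (-\<beta>)"
proof -
  note \<mu> = in_M_betaD[OF M]
  interpret finite_measure \<mu> by (rule \<mu>(3))
  define L where "L = nat \<lceil>l\<rceil>"
  define A where "A i = {1 - (real i + 1) / l .. 1}" for i :: nat
  define a where "a i = exp (- real i / 2)" for i :: nat
  have int: "integrable \<mu> (\<lambda>t. a i * indicator (A i) t)" for i
    using \<mu>(1) by (intro integrable_mult_right integrable_real_indicator)
      (auto simp: A_def less_top[symmetric])
  have "integrable \<mu> (\<lambda>t. \<Sum>i\<le>L. a i * indicator (A i) t)"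
    by (intro Bochner_Integration.integrable_sum int)
  then have "(\<integral>t. t powr (l/2) * indicator {0..1} t \<partial>\<mu>) \<le> (\<integral>t. (\<Sum>i\<le>L. a i * indicator (A i) t) \<partial>\<mu>)"
  proof (rule integral_mono')
    show "t powr (l/2) * indicator {0..1} t \<le> (\<Sum>i\<le>L. a i * indicator (A i) t)" for t
      unfolding L_def A_def a_def by (rule powr_half_le_layer_sum[OF \<open>1 \<le> l\<close>])
  qed (auto simp: a_def intro: sum_nonneg)
  also have "\<dots> = (\<Sum>i\<le>L. (\<integral>t. a i * indicator (A i) t \<partial>\<mu>))"
    by (intro Bochner_Integration.integral_sum int)
  also have "\<dots> = (\<Sum>i\<le>L. a i * measure \<mu> (A i))"
    using \<mu>(2) by simp
  also have "\<dots> \<le> (\<Sum>i\<le>L. a i * (max 0 Cmu * ((real i + 1) / l) powr \<beta>))"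
    unfolding A_def a_def using \<open>1 \<le> l\<close> by (intro sum_mono mult_left_mono \<mu>(5)) auto
  also have "\<dots> = max 0 Cmu * l powr (-\<beta>) * (\<Sum>i\<le>L. a i * (real i + 1) powr \<beta>)"
    using \<open>1 \<le> l\<close> by (simp add: sum_distrib_left powr_divide powr_minus_divide algebra_simps)
  also have "\<dots> \<le> max 0 Cmu * l powr (-\<beta>) * (\<Sum>i. a i * (real i + 1) powr \<beta>)"
    unfolding a_def using summable_exp_half_mult_powr[of \<beta>]
    by (intro mult_left_mono sum_le_suminf) auto
  finally show ?thesis by (simp add: moment_const_def a_def mult_ac)
qed

lemma integral_powr_le_of_pointwise_bound:
  assumes M: "in_M_beta \<beta> Cmu \<mu>" "0 < \<beta>" and "1 \<le> l" "1 \<le> p" "0 \<le> B"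
    and bound: "\<And>t. t \<in> {0..1} \<Longrightarrow> \<bar>f t\<bar> \<le> B * t powr (l/2)"
  shows "(\<integral>x. \<bar>f x\<bar> powr p \<partial>\<mu>) \<le> B powr p * (moment_const \<beta> Cmu * l powr (-\<beta>))"
proof -
  note \<mu> = in_M_betaD[OF M]
  interpret finite_measure \<mu> by (rule \<mu>(3))
  have meas: "(\<lambda>t. B powr p * (t powr (l/2) * indicator {0..1} t)) \<in> borel_measurable \<mu>"
    by (simp add: measurable_cong_sets[OF \<mu>(1) refl])
  have "AE x in \<mu>. norm (B powr p * (x powr (l/2) * indicator {0..1} x)) \<le> B powr p"
    using \<open>1 \<le> l\<close> by (intro AE_I2) (auto simp: indicator_def intro!: mult_left_le powr_le1)
  then have "integrable \<mu> (\<lambda>t. B powr p * (t powr (l/2) * indicator {0..1} t))"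
    using meas by (rule integrable_const_bound)
  then have "(\<integral>x. \<bar>f x\<bar> powr p \<partial>\<mu>) \<le> (\<integral>x. B powr p * (x powr (l/2) * indicator {0..1} x) \<partial>\<mu>)"
  proof (rule integral_mono_AE')
    show "AE x in \<mu>. \<bar>f x\<bar> powr p \<le> B powr p * (x powr (l/2) * indicator {0..1} x)"
      using \<mu>(4)
    proof eventually_elim
      case (elim x)
      have y: "0 \<le> x powr (l/2)" "x powr (l/2) \<le> 1" using elim \<open>1 \<le> l\<close> by (auto intro: powr_le1)
      have "\<bar>f x\<bar> powr p \<le> (B * x powr (l/2)) powr p"
        using bound elim \<open>1 \<le> p\<close> by (intro powr_mono2) auto
      also have "\<dots> = B powr p * (x powr (l/2)) powr p" using \<open>0 \<le> B\<close> by (simp add: powr_mult)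
      also have "(x powr (l/2)) powr p \<le> (x powr (l/2)) powr 1"
        using y \<open>1 \<le> p\<close> by (intro powr_mono') auto
      finally show ?case using elim y by (simp add: mult_left_mono)
    qed
  qed simp
  also have "\<dots> = B powr p * (\<integral>x. x powr (l/2) * indicator {0..1} x \<partial>\<mu>)" by simp
  also have "\<dots> \<le> B powr p * (moment_const \<beta> Cmu * l powr (-\<beta>))"
    using integral_powr_half_le_moment_const[OF M \<open>1 \<le> l\<close>] by (intro mult_left_mono) auto
  finally show ?thesis .
qed

lemma Lp_norm_le_of_pointwise_bound:
  assumes M: "in_M_beta \<beta> Cmu \<mu>" "0 < \<beta>" and "1 \<le> l" "1 \<le> p" "0 \<le> B"
    and bound: "\<And>t. t \<in> {0..1} \<Longrightarrow> \<bar>f t\<bar> \<le> B * t powr (l/2)"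
  shows "Lp_norm \<mu> p f \<le> B * (1 + moment_const \<beta> Cmu) * l powr (- \<beta> / p)"
proof -
  define D where "D = moment_const \<beta> Cmu"
  have "0 \<le> D" unfolding D_def by (rule moment_const_nonneg)
  have "Lp_norm \<mu> p f \<le> (B powr p * (D * l powr (-\<beta>))) powr (1/p)"
    unfolding Lp_norm_def D_def using assms
    by (intro powr_mono2 integral_powr_le_of_pointwise_bound) auto
  also have "\<dots> = B * D powr (1/p) * l powr (-\<beta>/p)"
    using \<open>0 \<le> B\<close> \<open>0 \<le> D\<close> \<open>1 \<le> p\<close> by (simp add: powr_mult powr_powr)
  also have "\<dots> \<le> B * (1 + D) * l powr (-\<beta>/p)"
  proof -
    have "D powr (1/p) \<le> max 1 D"
      using \<open>0 \<le> D\<close> \<open>1 \<le> p\<close> powr_le1[of "1/p" D] powr_mono[of "1/p" 1 D] by (cases "D \<le> 1") auto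
    then show ?thesis using \<open>0 \<le> B\<close> \<open>0 \<le> D\<close> by (intro mult_right_mono mult_left_mono) auto
  qed
  finally show ?thesis by (simp add: D_def)
qed


section \<open>Estimates on one block\<close>

lemma muntz_poly_Lp_bound:
  assumes J: "finite J" "card J \<le> N" and "1 \<le> N" "1 \<le> l"
    and lam: "\<forall>j\<in>J. l \<le> lam j \<and> lam j \<le> Q * l" and "1 \<le> p" "1 \<le> s" "-1 < \<alpha>"
    and M: "in_M_beta \<beta> Cmu \<mu>" "0 < \<beta>"
  shows "Lp_norm \<mu> p (muntz_poly c lam J)
    \<le> decay_const N Q * (sampling_const N s * exp 1 * 4 powr \<bar>\<alpha>\<bar>) powr (1/s) * (1 + moment_const \<beta> Cmu)
      * l powr ((1 + \<alpha>) / s - \<beta> / p) * wLp_norm \<alpha> s (muntz_poly c lam J)"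
proof -
  define K where "K = decay_const N Q * (sampling_const N s * exp 1 * 4 powr \<bar>\<alpha>\<bar>) powr (1/s)"
  define W where "W = wLp_norm \<alpha> s (muntz_poly c lam J)"
  have "0 \<le> K * l powr ((1 + \<alpha>) / s) * W"
    using decay_const_pos[of N Q] by (simp add: K_def W_def wLp_norm_def)
  then have "Lp_norm \<mu> p (muntz_poly c lam J)
      \<le> K * l powr ((1 + \<alpha>) / s) * W * (1 + moment_const \<beta> Cmu) * l powr (- \<beta> / p)"
    using muntz_poly_pointwise_bound[OF J \<open>1 \<le> N\<close> \<open>1 \<le> l\<close> lam \<open>1 \<le> s\<close> \<open>-1 < \<alpha>\<close>]
    by (intro Lp_norm_le_of_pointwise_bound[OF M \<open>1 \<le> l\<close> \<open>1 \<le> p\<close>]) (auto simp: K_def W_def)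
  also have "\<dots> = K * (1 + moment_const \<beta> Cmu) * (l powr ((1 + \<alpha>) / s) * l powr (- \<beta> / p)) * W"
    by (simp add: mult_ac)
  also have "l powr ((1 + \<alpha>) / s) * l powr (- \<beta> / p) = l powr ((1 + \<alpha>) / s - \<beta> / p)"
    by (simp add: powr_add[symmetric])
  finally show ?thesis by (simp add: K_def W_def)
qed

lemma muntz_seq_eventually_ge_1:
  assumes "muntz_seq lam"
  obtains K where "\<And>j. K \<le> j \<Longrightarrow> 1 \<le> lam j"
proof -
  have "(\<lambda>j. 1 / lam j) \<longlonglongrightarrow> 0"
    using assms by (intro summable_LIMSEQ_zero) (simp add: muntz_seq_def)
  then have "eventually (\<lambda>j. 1 / lam j < 1) sequentially"
    by (rule order_tendstoD(2)) simp
  then obtain K where K: "\<And>j. K \<le> j \<Longrightarrow> 1 / lam j < 1" by (auto simp: eventually_sequentially)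
  show ?thesis
  proof (rule that)
    fix j assume "K \<le> j"
    have "0 < lam j" using assms by (simp add: muntz_seq_def)
    with K[OF \<open>K \<le> j\<close>] show "1 \<le> lam j" by (simp add: divide_less_eq)
  qed
qed

lemma quasi_lacunary_block_bounds:
  assumes "muntz_seq lam" "quasi_lacunary lam q N nb" "j \<in> {nb k..<nb (Suc k)}"
  shows "lam (nb k) \<le> lam j" "lam j \<le> q ^ (2 * N) * lam (nb k)"
proof -
  have mono: "strict_mono lam" and pos: "0 < lam (nb k)" using assms(1) by (auto simp: muntz_seq_def)
  show "lam (nb k) \<le> lam j" using assms(3) mono by (simp add: strict_mono_less_eq)
  have "lam j < lam (nb (Suc k))" using assms(3) mono by (simp add: strict_mono_less)
  also have "\<dots> \<le> q ^ (2 * N) * lam (nb k)"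
    using assms(2) pos by (auto simp: quasi_lacunary_def divide_le_eq)
  finally show "lam j \<le> q ^ (2 * N) * lam (nb k)" by simp
qed

lemma block_space_Lp_bound:
  assumes "muntz_seq lam" "quasi_lacunary lam q N nb" "1 \<le> N" "1 \<le> lam (nb k)"
    and "f \<in> block_space lam nb k" and "1 \<le> p" "1 \<le> s" "-1 < \<alpha>"
    and M: "in_M_beta \<beta> Cmu \<mu>" "0 < \<beta>"
  shows "Lp_norm \<mu> p f
    \<le> decay_const N (q ^ (2 * N)) * (sampling_const N s * exp 1 * 4 powr \<bar>\<alpha>\<bar>) powr (1/s)
      * (1 + moment_const \<beta> Cmu) * lam (nb k) powr ((1 + \<alpha>) / s - \<beta> / p) * wLp_norm \<alpha> s f"
proof -
  obtain c where f: "f = muntz_poly c lam {nb k..<nb (Suc k)}"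
    using \<open>f \<in> block_space lam nb k\<close> by (auto simp: block_space_def muntz_poly_def[abs_def])
  have "card {nb k..<nb (Suc k)} \<le> N" using assms(2) by (simp add: quasi_lacunary_def)
  then show ?thesis
    unfolding f using assms quasi_lacunary_block_bounds[OF assms(1,2)]
    by (intro muntz_poly_Lp_bound) auto
qed

theorem proposition2p5:
  fixes q :: real and N :: nat and \<alpha> \<beta> Cmu :: real
  assumes "q > 1" and "N \<ge> 1" and "\<beta> > 0" and "\<alpha> > -1"
  shows "\<exists>C :: real \<Rightarrow> real \<Rightarrow> real. (\<forall>p s. C p s > 0) \<and>
    (\<forall>(lam :: nat \<Rightarrow> real) (nb :: nat \<Rightarrow> nat) (\<mu> :: real measure).
       muntz_seq lam \<longrightarrow> quasi_lacunary lam q N nb \<longrightarrow> in_M_beta \<beta> Cmu \<mu> \<longrightarrow>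
       (\<exists>k0 :: nat. k0 > 0 \<and> (\<forall>k \<ge> k0. \<forall>p s :: real. p \<ge> 1 \<longrightarrow> s \<ge> 1 \<longrightarrow>
          (\<forall>f \<in> block_space lam nb k.
             Lp_norm \<mu> p f \<le> C p s * lam (nb k) powr ((1 + \<alpha>) / s - \<beta> / p) * wLp_norm \<alpha> s f))))"
proof -
  define C where "C p s = decay_const N (q ^ (2 * N)) * (sampling_const N s * exp 1 * 4 powr \<bar>\<alpha>\<bar>) powr (1/s)
    * (1 + moment_const \<beta> Cmu)" for p s :: real
  have "C p s > 0" for p s
  proof -
    have "0 < sampling_const N s * exp 1 * 4 powr \<bar>\<alpha>\<bar>" using sampling_const_pos by simp
    then show ?thesis
      unfolding C_def using decay_const_pos moment_const_nonneg
      by (intro mult_pos_pos) (auto simp: add_pos_nonneg)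
  qed
  then show ?thesis
  proof (intro exI[of _ C] conjI allI impI)
    fix lam nb \<mu>
    assume lam: "muntz_seq lam" and nb: "quasi_lacunary lam q N nb" and \<mu>: "in_M_beta \<beta> Cmu \<mu>"
    obtain K where K: "\<And>j. K \<le> j \<Longrightarrow> 1 \<le> lam j" using muntz_seq_eventually_ge_1[OF lam] by blast
    show "\<exists>k0 :: nat. k0 > 0 \<and> (\<forall>k \<ge> k0. \<forall>p s :: real. p \<ge> 1 \<longrightarrow> s \<ge> 1 \<longrightarrow>
        (\<forall>f \<in> block_space lam nb k.
           Lp_norm \<mu> p f \<le> C p s * lam (nb k) powr ((1 + \<alpha>) / s - \<beta> / p) * wLp_norm \<alpha> s f))"
    proof (intro exI[of _ "K + 1"] conjI allI impI ballI)
      fix k and p s :: real and f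
      assume "K + 1 \<le> k" "1 \<le> p" "1 \<le> s" "f \<in> block_space lam nb k"
      moreover have "1 \<le> lam (nb k)"
        using K \<open>K + 1 \<le> k\<close> strict_mono_imp_increasing[of nb k] nb by (simp add: quasi_lacunary_def)
      ultimately show "Lp_norm \<mu> p f \<le> C p s * lam (nb k) powr ((1 + \<alpha>) / s - \<beta> / p) * wLp_norm \<alpha> s f"
        unfolding C_def using assms by (intro block_space_Lp_bound[OF lam nb _ _ _ _ _ _ \<mu>]) auto
    qed simp
  qed
qed

end
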